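(* Let $(X,d)$ be a metric space and $\ell:X\to[0,+\infty)$ a lower semicontinuous function with $\inf_X\ell=0$ satisfying hypothesis $(H_0)$. Define \[u_0(x):=\inf\Big\{\sum_{n=0}^\infty\ell(x_n)d(x_n,x_{n+1}):\{x_n\}_n\in\mathcal{K}(x)\Big\},\quad x\in X,\] where $\mathcal{K}(x)=\{\{x_n\}_n\subset X: x_0=x,\ \lim_{n\to\infty}\ell(x_n)=0\}$. Then $u_0$ is a solution of $(\mathcal{G}_0)$. Moreover, the same function is obtained if $\mathcal{K}(x)$ is replaced by $\widehat{\mathcal{K}}(x)=\{\{x_n\}_n\subset X: x_0=x,\ \{\ell(x_n)\}_n \text{ is decreasing},\ \lim_{n\to\infty}\ell(x_n)=0\}$.
   Context: Global slope: $G[u](x)=\sup_{y\neq x}\frac{(u(x)-u(y))_+}{d(x,y)}$ if $u(x)<+\infty$, $G[u](x)=+\infty$ otherwise. Equation $(\mathcal{G}_0)$: $G[u]=\ell$ on $X$ with $\inf_X u=0$; a solution is a lower semicontinuous $u:X\to\mathbb{R}\cup\{+\infty\}$ with $\inf_Xu=0$ and $G[u](x)=\ell(x)$ for all $x$. Hypothesis $(H_0)$: there is a sequence $\{\bar x_n\}_n\subset X$ with $\sum_{n=0}^\infty\ell(\bar x_n)d(\bar x_n,\bar x_{n+1})<+\infty$ and $\lim_{n\to\infty}\ell(\bar x_n)=0$. *)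

theory Defs
  imports "HOL-Analysis.Analysis" "HOL-Library.Extended_Real"
begin

definition lsc :: "('a::topological_space \<Rightarrow> 'b::linorder) \<Rightarrow> bool" where
  "lsc f \<longleftrightarrow> (\<forall>x c. c < f x \<longrightarrow> eventually (\<lambda>y. c < f y) (nhds x))"

text \<open>Global slope of u : X -> R \<union> {+\<infinity>} (values in ereal). Terms are nonnegative;
  the 0 included in the supremum only fixes the value of an empty supremum.\<close>
definition global_slope :: "('a::metric_space \<Rightarrow> ereal) \<Rightarrow> 'a \<Rightarrow> ereal" where
  "global_slope u x = (if u x = \<infinity> then \<infinity>
     else Sup (insert 0 ((\<lambda>y. max 0 (u x - u y) / ereal (dist x y)) ` {y. y \<noteq> x})))"

definition solves_G0 :: "('a::metric_space \<Rightarrow> real) \<Rightarrow> ('a \<Rightarrow> ereal) \<Rightarrow> bool" where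
  "solves_G0 l u \<longleftrightarrow> lsc u \<and> (\<forall>x. u x \<noteq> -\<infinity>) \<and> (INF x. u x) = 0 \<and>
     (\<forall>x. global_slope u x = ereal (l x))"

definition H0 :: "('a::metric_space \<Rightarrow> real) \<Rightarrow> bool" where
  "H0 l \<longleftrightarrow> (\<exists>xb::nat \<Rightarrow> 'a. summable (\<lambda>n. l (xb n) * dist (xb n) (xb (Suc n)))
      \<and> (\<lambda>n. l (xb n)) \<longlonglongrightarrow> 0)"

definition K_seq :: "('a::metric_space \<Rightarrow> real) \<Rightarrow> 'a \<Rightarrow> (nat \<Rightarrow> 'a) set" where
  "K_seq l x = {xs. xs 0 = x \<and> (\<lambda>n. l (xs n)) \<longlonglongrightarrow> 0}"

definition K_hat :: "('a::metric_space \<Rightarrow> real) \<Rightarrow> 'a \<Rightarrow> (nat \<Rightarrow> 'a) set" where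
  "K_hat l x = {xs. xs 0 = x \<and> decseq (\<lambda>n. l (xs n)) \<and> (\<lambda>n. l (xs n)) \<longlonglongrightarrow> 0}"

definition chain_cost :: "('a::metric_space \<Rightarrow> real) \<Rightarrow> (nat \<Rightarrow> 'a) \<Rightarrow> ereal" where
  "chain_cost l xs = (\<Sum>n. ereal (l (xs n) * dist (xs n) (xs (Suc n))))"

definition u0 :: "('a::metric_space \<Rightarrow> real) \<Rightarrow> 'a \<Rightarrow> ereal" where
  "u0 l x = (INF xs \<in> K_seq l x. chain_cost l xs)"

definition u0_hat :: "('a::metric_space \<Rightarrow> real) \<Rightarrow> 'a \<Rightarrow> ereal" where
  "u0_hat l x = (INF xs \<in> K_hat l x. chain_cost l xs)"

end

theory Submission
  imports Defs
begin

(* Prepending a step x \<rightarrow> y to a chain from y gives u0 x \<le> l x d(x,y) + u0 y, which makes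
   u0 lower semicontinuous and bounds its global slope by l.  Conversely, l > e' > e on a ball
   around x by lower semicontinuity; a nearly optimal chain from x must leave this ball, since
   l tends to 0 along it, and the part inside the ball costs at least e' times the distance from
   x to the exit point z, so u0 x - u0 z > e d(x,z).  The tails of the chain given by (H0) have
   vanishing cost, so inf u0 = 0.  Finally, replacing every point of a chain by the most recent
   running minimiser of l makes l decreasing along the chain without increasing its cost. *)

lemma suminf_ereal_split_initial_segment:
  fixes f :: "nat \<Rightarrow> real"
  assumes nonneg: "\<And>i. 0 \<le> f i"
  shows "(\<Sum>i. ereal (f i)) = ereal (\<Sum>i<k. f i) + (\<Sum>i. ereal (f (i + k)))"
proof (cases "summable f")
  case True
  then show ?thesis
    by (simp add: suminf_ereal' suminf_split_initial_segment[of f k])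
next
  case False
  then have "\<not> summable (\<lambda>i. f (i + k))" by simp
  with False have "(\<Sum>i. ereal (f i)) = \<infinity>" "(\<Sum>i. ereal (f (i + k))) = \<infinity>"
    using summable_ereal[of f, OF nonneg] summable_ereal[of "\<lambda>i. f (i + k)", OF nonneg] by auto
  then show ?thesis by simp
qed

lemma suminf_tail_tendsto_zero:
  fixes f :: "nat \<Rightarrow> 'a::real_normed_vector"
  assumes "summable f"
  shows "(\<lambda>n. \<Sum>i. f (i + n)) \<longlonglongrightarrow> 0"
proof -
  have "(\<lambda>n. suminf f - (\<Sum>i<n. f i)) \<longlonglongrightarrow> suminf f - suminf f"
    by (intro tendsto_diff tendsto_const summable_LIMSEQ assms)
  then show ?thesis by (simp add: suminf_minus_initial_segment[OF assms])
qed

lemma dist_le_sum_dist: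
  fixes xs :: "nat \<Rightarrow> 'a::metric_space"
  shows "dist (xs 0) (xs n) \<le> (\<Sum>i<n. dist (xs i) (xs (Suc i)))"
proof (induction n)
  case (Suc n)
  have "dist (xs 0) (xs (Suc n)) \<le> dist (xs 0) (xs n) + dist (xs n) (xs (Suc n))"
    by (rule dist_triangle)
  with Suc.IH show ?case by simp
qed simp

lemma lsc_if_le_add_dist:
  fixes u :: "'a::metric_space \<Rightarrow> ereal"
  assumes le: "\<And>x y. u x \<le> ereal (L x * dist x y) + u y"
  shows "lsc u"
  unfolding lsc_def
proof (intro allI impI)
  fix x c
  assume "c < u x"
  obtain b where "c < ereal b" and bu: "ereal b < u x"
    using ereal_dense2[OF \<open>c < u x\<close>] by blast
  then obtain a where ca: "c < ereal a" and "ereal a < ereal b"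
    using ereal_dense2 by blast
  then have ab: "a < b" by simp
  have "((\<lambda>y. L x * dist x y) \<longlongrightarrow> L x * dist x x) (nhds x)"
    by (intro tendsto_intros filterlim_ident)
  then have "eventually (\<lambda>y. L x * dist x y < b - a) (nhds x)"
    using ab by (auto intro: order_tendstoD(2))
  then show "eventually (\<lambda>y. c < u y) (nhds x)"
  proof (rule eventually_mono)
    fix y
    assume small: "L x * dist x y < b - a"
    show "c < u y"
    proof (rule ccontr)
      assume "\<not> c < u y"
      then have "u y \<le> ereal a" using ca by simp
      then have "u x \<le> ereal (L x * dist x y) + ereal a"
        using le[of x y] by (meson add_left_mono order_trans)
      moreover have "ereal (L x * dist x y) + ereal a < ereal b" using small by simp
      ultimately show False using bu by (meson leD less_trans)
    qed
  qed
qed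

lemma global_slope_le:
  fixes u :: "'a::metric_space \<Rightarrow> ereal"
  assumes finite: "\<bar>u x\<bar> \<noteq> \<infinity>" and "0 \<le> L"
    and le: "\<And>y. u x \<le> ereal (L * dist x y) + u y"
  shows "global_slope u x \<le> ereal L"
proof -
  have "max 0 (u x - u y) / ereal (dist x y) \<le> ereal L" if "y \<noteq> x" for y
  proof -
    have "u x - u y \<le> ereal (L * dist x y)"
      using le[of y] finite by (cases "u x"; cases "u y") auto
    then have "max 0 (u x - u y) \<le> ereal (dist x y) * ereal L"
      using \<open>0 \<le> L\<close> by (simp add: mult.commute)
    then show ?thesis
      using that by (simp add: ereal_divide_le_pos)
  qed
  then show ?thesis
    unfolding global_slope_def using finite \<open>0 \<le> L\<close> by (auto intro!: Sup_least)
qed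

lemma le_global_slope:
  fixes u :: "'a::metric_space \<Rightarrow> ereal"
  assumes "u x \<noteq> \<infinity>" "y \<noteq> x"
  shows "max 0 (u x - u y) / ereal (dist x y) \<le> global_slope u x"
  unfolding global_slope_def using assms by (auto intro!: max.coboundedI2 SUP_upper)

lemma global_slope_nonneg:
  fixes u :: "'a::metric_space \<Rightarrow> ereal"
  shows "0 \<le> global_slope u x"
  unfolding global_slope_def by (auto intro: Sup_upper)

lemma global_slope_ge_if_descent:
  fixes u :: "'a::metric_space \<Rightarrow> ereal"
  assumes "u x \<noteq> \<infinity>"
    and descent: "\<And>e. 0 \<le> e \<Longrightarrow> e < L \<Longrightarrow> \<exists>z. z \<noteq> x \<and> ereal (e * dist x z) + u z < u x"
  shows "ereal L \<le> global_slope u x"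
proof (rule dense_le)
  fix c
  assume "c < ereal L"
  show "c \<le> global_slope u x"
  proof (cases "c < 0")
    case True
    then show ?thesis using global_slope_nonneg[of u x] by simp
  next
    case False
    with \<open>c < ereal L\<close> obtain e where c: "c = ereal e" "0 \<le> e" "e < L"
      by (cases c) auto
    with descent obtain z where "z \<noteq> x" and z: "ereal (e * dist x z) + u z < u x"
      by blast
    then have "ereal (dist x z) * ereal e \<le> max 0 (u x - u z)"
      by (cases "u x"; cases "u z") (auto simp: mult.commute le_max_iff_disj)
    then have "c \<le> max 0 (u x - u z) / ereal (dist x z)"
      using \<open>z \<noteq> x\<close> c by (simp add: ereal_le_divide_pos)
    also have "\<dots> \<le> global_slope u x"
      using \<open>u x \<noteq> \<infinity>\<close> \<open>z \<noteq> x\<close> by (rule le_global_slope)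
    finally show ?thesis .
  qed
qed

primrec running_argmin :: "(nat \<Rightarrow> 'b::linorder) \<Rightarrow> nat \<Rightarrow> nat" where
  "running_argmin a 0 = 0"
| "running_argmin a (Suc n) =
     (if a (Suc n) \<le> a (running_argmin a n) then Suc n else running_argmin a n)"

lemma running_argmin_le: "running_argmin a n \<le> n"
  by (induction n) auto

lemma running_argmin_min: "j \<le> n \<Longrightarrow> a (running_argmin a n) \<le> a j"
  by (induction n) (auto simp: le_Suc_eq)

lemma decseq_running_argmin: "decseq (\<lambda>n. a (running_argmin a n))"
  unfolding decseq_Suc_iff using running_argmin_le
  by (intro allI running_argmin_min) (blast intro: le_SucI)

lemma chain_leaves_ball:
  fixes xs :: "nat \<Rightarrow> 'a::metric_space" and l :: "'a \<Rightarrow> real"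
  assumes "xs 0 = x" and lim: "(\<lambda>n. l (xs n)) \<longlonglongrightarrow> 0" and "0 < e"
    and large: "\<And>y. dist x y < r \<Longrightarrow> e < l y"
  shows "\<exists>M. r \<le> dist x (xs M) \<and>
           e * dist x (xs M) \<le> (\<Sum>i<M. l (xs i) * dist (xs i) (xs (Suc i)))"
proof -
  have "eventually (\<lambda>n. l (xs n) < e) sequentially"
    using lim \<open>0 < e\<close> by (rule order_tendstoD(2))
  then obtain N where "l (xs N) < e"
    by (auto simp: eventually_sequentially)
  then have "r \<le> dist x (xs N)"
    using large[of "xs N"] by (meson not_le order.asym)
  define M where "M = (LEAST m. r \<le> dist x (xs m))"
  have far: "r \<le> dist x (xs M)"
    unfolding M_def using \<open>r \<le> dist x (xs N)\<close> by (rule LeastI)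
  have inside: "e \<le> l (xs i)" if "i < M" for i
    using not_less_Least[of i "\<lambda>m. r \<le> dist x (xs m)"] that large[of "xs i"]
    unfolding M_def by simp
  have "e * dist x (xs M) \<le> e * (\<Sum>i<M. dist (xs i) (xs (Suc i)))"
    using dist_le_sum_dist[of xs M] \<open>xs 0 = x\<close> \<open>0 < e\<close> by simp
  also have "\<dots> \<le> (\<Sum>i<M. l (xs i) * dist (xs i) (xs (Suc i)))"
    unfolding sum_distrib_left by (intro sum_mono mult_right_mono) (simp_all add: inside)
  finally show ?thesis
    using far by blast
qed

lemma K_seq_shift:
  assumes "xs \<in> K_seq l x"
  shows "(\<lambda>i. xs (i + k)) \<in> K_seq l (xs k)"
  using assms LIMSEQ_ignore_initial_segment[of "\<lambda>n. l (xs n)" 0 k] by (simp add: K_seq_def)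

lemma K_seq_Cons:
  assumes "ys \<in> K_seq l y"
  shows "case_nat x ys \<in> K_seq l x"
  using assms filterlim_sequentially_Suc[of "\<lambda>n. l (case_nat x ys n)"] by (simp add: K_seq_def)

lemma u0_le_chain_cost: "xs \<in> K_seq l x \<Longrightarrow> u0 l x \<le> chain_cost l xs"
  unfolding u0_def by (rule INF_lower)

context
  fixes l :: "'a::metric_space \<Rightarrow> real"
  assumes nonneg: "\<And>x. 0 \<le> l x"
begin

lemma chain_cost_nonneg: "0 \<le> chain_cost l xs"
  unfolding chain_cost_def by (rule suminf_0_le) (simp add: nonneg)

lemma chain_cost_split:
  "chain_cost l xs = ereal (\<Sum>i<k. l (xs i) * dist (xs i) (xs (Suc i)))
     + chain_cost l (\<lambda>i. xs (i + k))"
  using suminf_ereal_split_initial_segment[of "\<lambda>i. l (xs i) * dist (xs i) (xs (Suc i))" k] nonneg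
  by (simp add: chain_cost_def)

lemma chain_cost_Cons: "chain_cost l (case_nat x ys) = ereal (l x * dist x (ys 0)) + chain_cost l ys"
  using chain_cost_split[of "case_nat x ys" 1] by simp

lemma chain_cost_running_argmin_le:
  "chain_cost l (\<lambda>n. xs (running_argmin (\<lambda>i. l (xs i)) n)) \<le> chain_cost l xs"
proof -
  define ys where "ys n = xs (running_argmin (\<lambda>i. l (xs i)) n)" for n
  define s where "s k = l (ys k) * dist (ys k) (ys (Suc k))" for k
  define t where "t k = l (xs k) * dist (xs k) (xs (Suc k))" for k
  \<comment> \<open>what ys would pay for jumping to xs n now; it makes the comparison telescope\<close>
  define pending where "pending n = l (ys n) * dist (ys n) (xs n)" for n
  have step: "s n + pending (Suc n) \<le> pending n + t n" for n
  proof -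
    have "s n + pending (Suc n) = l (ys n) * dist (ys n) (xs (Suc n))"
      by (simp add: s_def pending_def ys_def)
    also have "\<dots> \<le> l (ys n) * (dist (ys n) (xs n) + dist (xs n) (xs (Suc n)))"
      by (intro mult_left_mono dist_triangle nonneg)
    also have "\<dots> \<le> pending n + t n"
      using running_argmin_min[of n n "\<lambda>i. l (xs i)"]
      by (simp add: pending_def t_def ys_def distrib_left mult_right_mono)
    finally show ?thesis .
  qed
  have partial: "(\<Sum>k<n. s k) + pending n \<le> (\<Sum>k<n. t k)" for n
  proof (induction n)
    case (Suc n)
    then show ?case using step[of n] by simp
  qed (simp add: pending_def ys_def)
  have "(\<Sum>k<n. ereal (s k)) \<le> (\<Sum>k. ereal (t k))" for n
  proof -
    have "0 \<le> pending n"
      by (simp add: pending_def nonneg)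
    with partial[of n] have "(\<Sum>k<n. ereal (s k)) \<le> (\<Sum>k<n. ereal (t k))"
      by simp
    also have "\<dots> \<le> (\<Sum>k. ereal (t k))"
      by (rule suminf_upper) (simp add: t_def nonneg)
    finally show ?thesis .
  qed
  then have "(\<Sum>k. ereal (s k)) \<le> (\<Sum>k. ereal (t k))"
    by (intro suminf_bound allI) (simp_all add: s_def nonneg)
  then show ?thesis
    by (simp add: chain_cost_def s_def t_def ys_def)
qed

lemma u0_nonneg: "0 \<le> u0 l x"
  unfolding u0_def by (rule INF_greatest) (rule chain_cost_nonneg)

lemma u0_le_add_dist: "u0 l x \<le> ereal (l x * dist x y) + u0 l y"
proof (cases "K_seq l y = {}")
  case True
  then show ?thesis by (simp add: u0_def top_ereal_def)
next
  case False
  have "u0 l x \<le> ereal (l x * dist x y) + chain_cost l ys" if "ys \<in> K_seq l y" for ys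
  proof -
    have "u0 l x \<le> chain_cost l (case_nat x ys)"
      using that by (intro u0_le_chain_cost K_seq_Cons)
    also have "\<dots> = ereal (l x * dist x y) + chain_cost l ys"
      using that by (simp add: chain_cost_Cons K_seq_def)
    finally show ?thesis .
  qed
  then have "u0 l x \<le> (INF ys \<in> K_seq l y. ereal (l x * dist x y) + chain_cost l ys)"
    by (rule INF_greatest)
  also have "\<dots> = ereal (l x * dist x y) + u0 l y"
    unfolding u0_def using False chain_cost_nonneg by (intro INF_ereal_add_right) auto
  finally show ?thesis .
qed

lemma u0_lsc: "lsc (u0 l)"
  using u0_le_add_dist by (rule lsc_if_le_add_dist)

lemma u0_hat_eq_u0: "u0_hat l = u0 l"
proof
  fix x
  show "u0_hat l x = u0 l x"
  proof (rule antisym)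
    show "u0_hat l x \<le> u0 l x"
      unfolding u0_def
    proof (rule INF_greatest)
      fix xs
      assume "xs \<in> K_seq l x"
      then have "xs 0 = x" and lim: "(\<lambda>n. l (xs n)) \<longlonglongrightarrow> 0"
        by (simp_all add: K_seq_def)
      let ?ys = "\<lambda>n. xs (running_argmin (\<lambda>i. l (xs i)) n)"
      have "(\<lambda>n. l (?ys n)) \<longlonglongrightarrow> 0"
        using nonneg running_argmin_min[of _ _ "\<lambda>i. l (xs i)"]
        by (intro tendsto_sandwich[OF _ _ tendsto_const lim]) auto
      then have "?ys \<in> K_hat l x"
        using \<open>xs 0 = x\<close> decseq_running_argmin[of "\<lambda>i. l (xs i)"] by (simp add: K_hat_def)
      then have "u0_hat l x \<le> chain_cost l ?ys"
        unfolding u0_hat_def by (rule INF_lower)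
      also have "\<dots> \<le> chain_cost l xs"
        by (rule chain_cost_running_argmin_le)
      finally show "u0_hat l x \<le> chain_cost l xs" .
    qed
    show "u0 l x \<le> u0_hat l x"
      unfolding u0_def u0_hat_def by (rule INF_superset_mono) (auto simp: K_seq_def K_hat_def)
  qed
qed

context
  assumes H0: "H0 l"
begin

lemma u0_finite: "\<bar>u0 l x\<bar> \<noteq> \<infinity>"
proof -
  obtain xb where summable: "summable (\<lambda>n. l (xb n) * dist (xb n) (xb (Suc n)))"
    and "(\<lambda>n. l (xb n)) \<longlonglongrightarrow> 0"
    using H0 by (auto simp: H0_def)
  then have "u0 l (xb 0) \<le> chain_cost l xb"
    by (intro u0_le_chain_cost) (simp add: K_seq_def)
  then have "u0 l (xb 0) \<noteq> \<infinity>"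
    using suminf_ereal_finite[OF summable] by (auto simp: chain_cost_def top_unique)
  then have "u0 l x \<noteq> \<infinity>"
    using u0_le_add_dist[of x "xb 0"] by (auto simp: top_unique)
  then show ?thesis
    using u0_nonneg[of x] by auto
qed

lemma INF_u0_eq_0: "(INF x. u0 l x) = 0"
proof (rule antisym)
  obtain xb where summable: "summable (\<lambda>n. l (xb n) * dist (xb n) (xb (Suc n)))"
    and "(\<lambda>n. l (xb n)) \<longlonglongrightarrow> 0"
    using H0 by (auto simp: H0_def)
  then have xb: "xb \<in> K_seq l (xb 0)" by (simp add: K_seq_def)
  let ?tail = "\<lambda>n. \<Sum>i. l (xb (i + n)) * dist (xb (i + n)) (xb (Suc (i + n)))"
  have "(INF x. u0 l x) \<le> ereal (?tail n)" for n
  proof -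
    have "(INF x. u0 l x) \<le> u0 l (xb n)" by (rule INF_lower) simp
    also have "\<dots> \<le> chain_cost l (\<lambda>i. xb (i + n))"
      using K_seq_shift[OF xb] by (rule u0_le_chain_cost)
    also have "\<dots> = ereal (?tail n)"
      using summable_iff_shift[where f = "\<lambda>i. l (xb i) * dist (xb i) (xb (Suc i))" and k = n] summable
      by (simp add: chain_cost_def suminf_ereal')
    finally show ?thesis .
  qed
  moreover have "(\<lambda>n. ereal (?tail n)) \<longlonglongrightarrow> ereal 0"
    using suminf_tail_tendsto_zero[OF summable] by (rule tendsto_ereal)
  ultimately show "(INF x. u0 l x) \<le> 0"
    using LIMSEQ_le_const[of "\<lambda>n. ereal (?tail n)"] zero_ereal_def by fastforce
  show "0 \<le> (INF x. u0 l x)"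
    by (rule INF_greatest) (rule u0_nonneg)
qed

lemma u0_descent:
  assumes "lsc l" and "0 \<le> e" and "e < l x"
  shows "\<exists>z. z \<noteq> x \<and> ereal (e * dist x z) + u0 l z < u0 l x"
proof -
  define e' where "e' = (e + l x) / 2"
  have "e < e'" "e' < l x"
    using \<open>e < l x\<close> by (simp_all add: e'_def)
  then have "eventually (\<lambda>y. e' < l y) (nhds x)"
    using \<open>lsc l\<close> unfolding lsc_def by blast
  then obtain r where "0 < r" and large: "\<And>y. dist x y < r \<Longrightarrow> e' < l y"
    unfolding eventually_nhds_metric by (auto simp: dist_commute)
  obtain U where U: "u0 l x = ereal U"
    using u0_finite[of x] by (cases "u0 l x") auto
  have "u0 l x < ereal (U + (e' - e) * r)"
    using U \<open>e < e'\<close> \<open>0 < r\<close> by simp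
  then obtain xs where xs: "xs \<in> K_seq l x" and cost: "chain_cost l xs < ereal (U + (e' - e) * r)"
    unfolding u0_def INF_less_iff by blast
  then have "xs 0 = x" "(\<lambda>n. l (xs n)) \<longlonglongrightarrow> 0"
    by (simp_all add: K_seq_def)
  with \<open>e < e'\<close> \<open>0 \<le> e\<close> large obtain M where far: "r \<le> dist x (xs M)"
    and partial: "e' * dist x (xs M) \<le> (\<Sum>i<M. l (xs i) * dist (xs i) (xs (Suc i)))"
    using chain_leaves_ball[of xs x l e' r] by auto
  define z where "z = xs M"
  obtain V where V: "u0 l z = ereal V"
    using u0_finite[of z] by (cases "u0 l z") auto
  have "ereal (\<Sum>i<M. l (xs i) * dist (xs i) (xs (Suc i))) + u0 l z \<le> chain_cost l xs"
    unfolding chain_cost_split[of xs M] z_def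
    using u0_le_chain_cost[OF K_seq_shift[OF xs]] by (rule add_left_mono)
  then have "ereal (\<Sum>i<M. l (xs i) * dist (xs i) (xs (Suc i))) + u0 l z < ereal (U + (e' - e) * r)"
    using cost by (rule order_le_less_trans)
  with partial V have "e' * dist x z + V < U + (e' - e) * r"
    unfolding z_def by simp
  moreover have "(e' - e) * r \<le> (e' - e) * dist x z"
    using far \<open>e < e'\<close> unfolding z_def by simp
  ultimately have "e * dist x z + V < U"
    by (simp add: algebra_simps)
  moreover have "z \<noteq> x"
    using far \<open>0 < r\<close> unfolding z_def by auto
  ultimately show ?thesis
    using U V by auto
qed

end

end

theorem proposition3p9:
  fixes l :: "'a::metric_space \<Rightarrow> real"
  assumes nonneg: "\<And>x. l x \<ge> 0"
    and lsc_l: "lsc l"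
    and inf_l: "(INF x. l x) = 0"
    and H0: "H0 l"
  shows "solves_G0 l (u0 l) \<and> u0_hat l = u0 l"
proof -
  note u0_finite = u0_finite[of l, OF nonneg H0]
  have "global_slope (u0 l) x = ereal (l x)" for x
  proof (rule antisym)
    show "global_slope (u0 l) x \<le> ereal (l x)"
      using u0_finite nonneg u0_le_add_dist[of l, OF nonneg] by (rule global_slope_le)
    show "ereal (l x) \<le> global_slope (u0 l) x"
      using u0_finite[of x] u0_descent[of l, OF nonneg H0 lsc_l]
      by (intro global_slope_ge_if_descent) auto
  qed
  moreover have "u0 l x \<noteq> -\<infinity>" for x
    using u0_finite[of x] by auto
  ultimately show ?thesis
    unfolding solves_G0_def
    using u0_lsc[of l, OF nonneg] INF_u0_eq_0[of l, OF nonneg H0] u0_hat_eq_u0[of l, OF nonneg]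
    by blast
qed

end
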